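(* Let $\mathcal B$ be finite, $r,\tilde r:\mathcal B\to\mathbb R$, $\nu\in\Delta(\mathcal B)$ with $\nu(b)>0$ for all $b$, and $\varepsilon\ge0$. Suppose $\inf_{\xi\in\mathbb R}\langle\nu,|r-\tilde r-\xi\mathbf 1|\rangle_{\mathcal B}\le\varepsilon$ and $\langle x,r-\tilde r\rangle_{\mathcal B}=0$ for some $x:\mathcal B\to\mathbb R$ with $\langle\mathbf 1,x\rangle_{\mathcal B}\ne0$. Then $$\langle\nu,|r-\tilde r|\rangle_{\mathcal B}\le\Bigl(1+\Bigl\|\frac x\nu\Bigr\|_\infty\cdot\frac1{|\langle x,\mathbf 1\rangle_{\mathcal B}|}\Bigr)\varepsilon.$$
   Context: $\langle f,g\rangle_{\mathcal B}=\sum_bf(b)g(b)$; $x/\nu$ is the entrywise ratio; $\mathbf 1$ is the all-ones function. *)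

theory Defs
  imports "HOL-Analysis.Analysis"
begin

end

theory Submission
  imports Defs
begin

(* Write d = r - rt. For any shift \<xi>, the triangle inequality gives
   <\<nu>,|d|> \<le> <\<nu>,|d - \<xi>|> + |\<xi>|. Orthogonality of x to d turns \<xi> <x,1> into
   <x, \<xi> - d>, which is at most ||x/\<nu>||_\<infinity> <\<nu>,|d - \<xi>|>. Hence
   <\<nu>,|d|> \<le> (1 + ||x/\<nu>||_\<infinity> / |<x,1>|) <\<nu>,|d - \<xi>|> for every \<xi>; take the infimum. *)

lemma weighted_abs_sum_le_shift:
  fixes \<nu> d :: "'b \<Rightarrow> real"
  assumes "\<And>b. b \<in> B \<Longrightarrow> \<nu> b \<ge> 0" and "(\<Sum>b\<in>B. \<nu> b) = 1"
  shows "(\<Sum>b\<in>B. \<nu> b * \<bar>d b\<bar>) \<le> (\<Sum>b\<in>B. \<nu> b * \<bar>d b - \<xi>\<bar>) + \<bar>\<xi>\<bar>"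
proof -
  have "(\<Sum>b\<in>B. \<nu> b * \<bar>d b\<bar>) \<le> (\<Sum>b\<in>B. \<nu> b * \<bar>d b - \<xi>\<bar> + \<nu> b * \<bar>\<xi>\<bar>)"
  proof (rule sum_mono)
    fix b assume "b \<in> B"
    then have "\<nu> b * \<bar>d b\<bar> \<le> \<nu> b * (\<bar>d b - \<xi>\<bar> + \<bar>\<xi>\<bar>)"
      using assms(1) by (intro mult_left_mono) auto
    then show "\<nu> b * \<bar>d b\<bar> \<le> \<nu> b * \<bar>d b - \<xi>\<bar> + \<nu> b * \<bar>\<xi>\<bar>"
      by (simp add: distrib_left)
  qed
  also have "\<dots> = (\<Sum>b\<in>B. \<nu> b * \<bar>d b - \<xi>\<bar>) + \<bar>\<xi>\<bar>"
    using assms(2) by (simp add: sum.distrib flip: sum_distrib_right)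
  finally show ?thesis .
qed

lemma abs_shift_mult_sum_le_of_orthogonal:
  fixes \<nu> d x :: "'b \<Rightarrow> real"
  assumes "(\<Sum>b\<in>B. x b * d b) = 0" and "\<And>b. b \<in> B \<Longrightarrow> \<bar>x b\<bar> \<le> M * \<nu> b"
  shows "\<bar>\<xi>\<bar> * \<bar>\<Sum>b\<in>B. x b\<bar> \<le> M * (\<Sum>b\<in>B. \<nu> b * \<bar>d b - \<xi>\<bar>)"
proof -
  have "\<xi> * (\<Sum>b\<in>B. x b) = (\<Sum>b\<in>B. x b * (\<xi> - d b))"
    using assms(1) by (simp add: algebra_simps sum_subtractf sum_distrib_left)
  then have "\<bar>\<xi>\<bar> * \<bar>\<Sum>b\<in>B. x b\<bar> = \<bar>\<Sum>b\<in>B. x b * (\<xi> - d b)\<bar>"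
    by (metis abs_mult)
  also have "\<dots> \<le> (\<Sum>b\<in>B. \<bar>x b\<bar> * \<bar>d b - \<xi>\<bar>)"
    by (rule order_trans[OF sum_abs]) (simp add: abs_mult abs_minus_commute)
  also have "\<dots> \<le> (\<Sum>b\<in>B. M * \<nu> b * \<bar>d b - \<xi>\<bar>)"
    using assms(2) by (intro sum_mono mult_right_mono) auto
  also have "\<dots> = M * (\<Sum>b\<in>B. \<nu> b * \<bar>d b - \<xi>\<bar>)"
    by (simp add: sum_distrib_left mult.assoc)
  finally show ?thesis .
qed

lemma weighted_abs_sum_le_of_orthogonal:
  fixes \<nu> d x :: "'b \<Rightarrow> real"
  assumes "\<And>b. b \<in> B \<Longrightarrow> \<nu> b \<ge> 0" and "(\<Sum>b\<in>B. \<nu> b) = 1"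
    and "(\<Sum>b\<in>B. x b * d b) = 0" and "(\<Sum>b\<in>B. x b) \<noteq> 0"
    and "\<And>b. b \<in> B \<Longrightarrow> \<bar>x b\<bar> \<le> M * \<nu> b"
  shows "(\<Sum>b\<in>B. \<nu> b * \<bar>d b\<bar>)
     \<le> (1 + M * (1 / \<bar>\<Sum>b\<in>B. x b\<bar>)) * (\<Sum>b\<in>B. \<nu> b * \<bar>d b - \<xi>\<bar>)"
proof -
  have "\<bar>\<xi>\<bar> \<le> M * (\<Sum>b\<in>B. \<nu> b * \<bar>d b - \<xi>\<bar>) / \<bar>\<Sum>b\<in>B. x b\<bar>"
    using abs_shift_mult_sum_le_of_orthogonal[OF assms(3,5)] assms(4)
    by (simp add: pos_le_divide_eq)
  then show ?thesis
    using weighted_abs_sum_le_shift[OF assms(1,2), of d \<xi>] by (simp add: algebra_simps)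
qed

lemma abs_le_Max_abs_ratio_mult:
  fixes \<nu> x :: "'b \<Rightarrow> real"
  assumes "finite B" and "b \<in> B" and "\<nu> b > 0"
  shows "\<bar>x b\<bar> \<le> (MAX c\<in>B. \<bar>x c / \<nu> c\<bar>) * \<nu> b"
proof -
  have "\<bar>x b\<bar> = \<bar>x b / \<nu> b\<bar> * \<nu> b"
    using assms(3) by (simp add: abs_divide)
  also have "\<dots> \<le> (MAX c\<in>B. \<bar>x c / \<nu> c\<bar>) * \<nu> b"
    using assms by (intro mult_right_mono Max_ge finite_imageI imageI) auto
  finally show ?thesis .
qed

theorem mainTheorem14:
  fixes B :: "'b set" and r rt \<nu> x :: "'b \<Rightarrow> real" and \<epsilon> :: real
  assumes "finite B"
    and "\<forall>b\<in>B. \<nu> b > 0" and "(\<Sum>b\<in>B. \<nu> b) = 1"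
    and "\<epsilon> \<ge> 0"
    and "(INF \<xi>::real. (\<Sum>b\<in>B. \<nu> b * \<bar>r b - rt b - \<xi>\<bar>)) \<le> \<epsilon>"
    and "(\<Sum>b\<in>B. x b * (r b - rt b)) = 0"
    and "(\<Sum>b\<in>B. x b) \<noteq> 0"
  shows "(\<Sum>b\<in>B. \<nu> b * \<bar>r b - rt b\<bar>)
     \<le> (1 + (MAX b\<in>B. \<bar>x b / \<nu> b\<bar>) * (1 / \<bar>\<Sum>b\<in>B. x b\<bar>)) * \<epsilon>"
proof -
  define C where "C = 1 + (MAX b\<in>B. \<bar>x b / \<nu> b\<bar>) * (1 / \<bar>\<Sum>b\<in>B. x b\<bar>)"
  have "B \<noteq> {}"
    using assms(7) by auto
  then have "C \<ge> 1"
    unfolding C_def using assms(1) by (auto simp: Max_ge_iff)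
  have bound: "(\<Sum>b\<in>B. \<nu> b * \<bar>r b - rt b\<bar>) \<le> C * (\<Sum>b\<in>B. \<nu> b * \<bar>r b - rt b - \<xi>\<bar>)" for \<xi>
    unfolding C_def using assms
    by (intro weighted_abs_sum_le_of_orthogonal abs_le_Max_abs_ratio_mult) (auto simp: less_imp_le)
  have "(\<Sum>b\<in>B. \<nu> b * \<bar>r b - rt b\<bar>) / C \<le> (INF \<xi>::real. (\<Sum>b\<in>B. \<nu> b * \<bar>r b - rt b - \<xi>\<bar>))"
    using bound \<open>C \<ge> 1\<close> by (intro cINF_greatest) (auto simp: pos_divide_le_eq mult.commute)
  also have "\<dots> \<le> \<epsilon>"
    by (fact assms(5))
  finally have "(\<Sum>b\<in>B. \<nu> b * \<bar>r b - rt b\<bar>) \<le> C * \<epsilon>"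
    using \<open>C \<ge> 1\<close> by (simp add: pos_divide_le_eq mult.commute)
  then show ?thesis
    unfolding C_def .
qed

end
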